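(* Let $S=(v_1,\ldots,v_n)$ be an $(n,k)$-uframe, fix $i\in[n]$ and $v\in\mathbb{R}^k$, and let $\tilde S$ be obtained from $S$ by replacing $v_i$ with $v$. Suppose $|v_i|<1$, $|B_{S\setminus i}v_i|\leqslant|B_{S\setminus i}v|$, and $\mathop{\rm co}(\pm\tilde S)\subset\mathop{\rm co}(\pm S)$. Then for the $(n,k)$-uframe $S'=B_{\tilde S}\tilde S$, $$\vol\left(\mathop{\rm co}(\pm S')\right)\leqslant\vol\left(\mathop{\rm co}(\pm S)\right),$$ with equality if and only if $|B_{S\setminus i}v_i|=|B_{S\setminus i}v|$ and $\mathop{\rm co}(\pm\tilde S)=\mathop{\rm co}(\pm S)$.
   Context: An $(n,k)$-frame is an ordered $n$-tuple of vectors in $\mathbb{R}^k$ spanning $\mathbb{R}^k$. For a tuple $T=(w_j)$ of vectors, $A_T=\sum_j w_jw_j^T$; if positive definite, $B_T=A_T^{-1/2}$ and $B_TT=(B_Tw_j)_j$. An $(n,k)$-uframe is a frame with $A_T=I_k$. $S\setminus i=(v_j)_{j\neq i}$. $\mathop{\rm co}(\pm T)=\mathop{\rm co}\{\pm w_j\}$. $\vol$ is $k$-dimensional volume, $|\cdot|$ the Euclidean norm. *)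

theory Defs
  imports "HOL-Analysis.Analysis"
begin

definition outer :: "real^'k \<Rightarrow> real^'k \<Rightarrow> real^'k^'k" where
  "outer x y = (\<chi> a b. x $ a * y $ b)"

definition gram :: "('n \<Rightarrow> real^'k) \<Rightarrow> 'n set \<Rightarrow> real^'k^'k" where
  "gram T J = (\<Sum>j\<in>J. outer (T j) (T j))"

definition pos_def :: "real^'k^'k \<Rightarrow> bool" where
  "pos_def M \<longleftrightarrow> transpose M = M \<and> (\<forall>x. x \<noteq> 0 \<longrightarrow> 0 < x \<bullet> (M *v x))"

definition inv_sqrt :: "real^'k^'k \<Rightarrow> real^'k^'k" where
  "inv_sqrt A = (THE M. pos_def M \<and> M ** M = matrix_inv A)"

definition Bmat :: "('n \<Rightarrow> real^'k) \<Rightarrow> 'n set \<Rightarrow> real^'k^'k" where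
  "Bmat T J = inv_sqrt (gram T J)"

definition is_frame :: "('n::finite \<Rightarrow> real^'k) \<Rightarrow> bool" where
  "is_frame T \<longleftrightarrow> span (range T) = UNIV"

definition is_uframe :: "('n::finite \<Rightarrow> real^'k) \<Rightarrow> bool" where
  "is_uframe T \<longleftrightarrow> is_frame T \<and> gram T UNIV = mat 1"

definition cosym :: "('n \<Rightarrow> real^'k) \<Rightarrow> 'n set \<Rightarrow> (real^'k) set" where
  "cosym T J = convex hull (T ` J \<union> uminus ` T ` J)"

end

theory Submission
  imports Defs
begin

text \<open>Let \<open>C\<close> be the Gram matrix of \<open>S\<close> without \<open>v\<^sub>i\<close>. Since \<open>A\<^sub>S = I\<close>, we have
  \<open>C = I - v\<^sub>i v\<^sub>i\<^sup>T\<close>, which is positive definite because \<open>|v\<^sub>i| < 1\<close>. Both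
  \<open>I = C + v\<^sub>i v\<^sub>i\<^sup>T\<close> and the Gram matrix \<open>A = C + v v\<^sup>T\<close> of the modified tuple are
  rank-one updates of \<open>C\<close>, so the matrix determinant lemma
  \<open>det (C + w w\<^sup>T) = det C (1 + |C\<^sup>-\<^sup>1\<^sup>/\<^sup>2 w|\<^sup>2)\<close> gives
  \<open>det A = (1 + |C\<^sup>-\<^sup>1\<^sup>/\<^sup>2 v|\<^sup>2) / (1 + |C\<^sup>-\<^sup>1\<^sup>/\<^sup>2 v\<^sub>i|\<^sup>2) \<ge> 1\<close>,
  with equality iff the two norms agree. The new uframe is the image of the modified tuple under
  \<open>A\<^sup>-\<^sup>1\<^sup>/\<^sup>2\<close>, which scales volumes by \<open>(det A)\<^sup>-\<^sup>1\<^sup>/\<^sup>2 \<le> 1\<close>; with the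
  inclusion of the hulls this gives the inequality. Equality forces \<open>det A = 1\<close> and equal volumes
  of the two nested hulls, and a compact subset of a convex body with the same volume is the whole
  body.\<close>

section \<open>Outer products and Gram matrices\<close>

lemma outer_mulv: "outer x y *v z = (y \<bullet> z) *\<^sub>R x"
  by (simp add: vec_eq_iff matrix_vector_mult_def outer_def inner_vec_def sum_distrib_left
      sum_distrib_right mult_ac)

lemma sum_matrix_vector_mult: "sum f J *v x = (\<Sum>j\<in>J. f j *v x)"
  for x :: "real^'k"
  by (induction J rule: infinite_finite_induct) (auto simp: matrix_vector_mult_add_rdistrib)

lemma gram_mulv: "gram T J *v z = (\<Sum>j\<in>J. (T j \<bullet> z) *\<^sub>R T j)"
  by (simp add: gram_def sum_matrix_vector_mult outer_mulv)

lemma transpose_mulv_inner: "(transpose A *v x) \<bullet> y = x \<bullet> (A *v y)"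
  for A :: "real^'k^'k"
  by (metis dot_lmul_matrix transpose_matrix_vector)

lemma symmetric_mulv_inner:
  fixes A :: "real^'k^'k"
  assumes "transpose A = A"
  shows "(A *v x) \<bullet> y = x \<bullet> (A *v y)"
  using transpose_mulv_inner[of A x y] unfolding assms .

lemma gram_split: "gram T UNIV = gram T (UNIV - {i}) + outer (T i) (T i)"
  for T :: "'n::finite \<Rightarrow> real^'k"
  unfolding gram_def by (simp add: sum.remove[of UNIV i] add.commute)

lemma gram_fun_upd_remove: "gram (T(i := v)) (UNIV - {i}) = gram T (UNIV - {i})"
  unfolding gram_def by (rule sum.cong) auto

lemma gram_image: "gram (\<lambda>j. B *v T j) J = B ** gram T J ** transpose B"
  for B :: "real^'k^'k"
proof (subst matrix_eq, intro allI)
  fix x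
  have "(B ** gram T J ** transpose B) *v x = B *v (gram T J *v (transpose B *v x))"
    by (simp only: matrix_vector_mul_assoc matrix_mul_assoc)
  also have "\<dots> = (\<Sum>j\<in>J. (T j \<bullet> (transpose B *v x)) *\<^sub>R (B *v T j))"
    by (simp only: gram_mulv linear_sum[OF matrix_vector_mul_linear] matrix_vector_mult_scaleR)
  also have "\<dots> = gram (\<lambda>j. B *v T j) J *v x"
  proof -
    have "T j \<bullet> (transpose B *v x) = (B *v T j) \<bullet> x" for j
      using transpose_mulv_inner[of B x "T j"] by (simp add: inner_commute)
    then show ?thesis
      by (simp only: gram_mulv)
  qed
  finally show "gram (\<lambda>j. B *v T j) J *v x = (B ** gram T J ** transpose B) *v x"
    by (rule sym)
qed

lemma is_frame_if_gram_eq_mat1: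
  fixes T :: "'n::finite \<Rightarrow> real^'k"
  assumes "gram T UNIV = mat 1"
  shows "is_frame T"
proof -
  have "x \<in> span (range T)" for x
  proof -
    have "x = (\<Sum>j\<in>UNIV. (T j \<bullet> x) *\<^sub>R T j)"
      using gram_mulv[of T UNIV x] assms by simp
    also have "\<dots> \<in> span (range T)"
      by (intro span_sum span_scale span_base) auto
    finally show ?thesis .
  qed
  then show ?thesis
    by (auto simp: is_frame_def)
qed

lemma cosym_image: "cosym (\<lambda>j. B *v T j) J = (\<lambda>x. B *v x) ` cosym T J"
  for B :: "real^'k^'k"
proof -
  have "(\<lambda>x. B *v x) ` cosym T J = convex hull ((\<lambda>x. B *v x) ` (T ` J \<union> uminus ` T ` J))"
    unfolding cosym_def by (rule convex_hull_linear_image[OF matrix_vector_mul_linear])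
  also have "(\<lambda>x. B *v x) ` (T ` J \<union> uminus ` T ` J)
      = (\<lambda>j. B *v T j) ` J \<union> uminus ` (\<lambda>j. B *v T j) ` J"
    by (simp add: image_Un image_image linear_neg[OF matrix_vector_mul_linear])
  finally show ?thesis
    unfolding cosym_def[of "\<lambda>j. B *v T j"] by (rule sym)
qed

section \<open>Spectral theorem and square roots of positive definite matrices\<close>

lemma linear_coeff_eq_0_if_quadratic_nonpos:
  fixes c d :: real
  assumes "\<And>t. 2 * t * c + t\<^sup>2 * d \<le> 0"
  shows "c = 0"
proof (rule ccontr)
  assume "c \<noteq> 0"
  define a where "a = \<bar>d\<bar> + 1"
  have "a > 0"
    by (simp add: a_def)
  have "2 * (c / a) * c + (c / a)\<^sup>2 * d = c\<^sup>2 * (2 * a + d) / a\<^sup>2"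
    using \<open>a > 0\<close> by (simp add: field_simps power2_eq_square)
  moreover have "c\<^sup>2 * (2 * a + d) / a\<^sup>2 > 0"
    using \<open>c \<noteq> 0\<close> \<open>a > 0\<close> by (intro divide_pos_pos mult_pos_pos) (auto simp: abs_if a_def)
  ultimately show False
    using assms[of "c / a"] by linarith
qed

text \<open>The first-order condition for the maximum in every direction \<open>w \<in> W\<close> says that
  \<open>A u - (u \<bullet> A u) u\<close> is orthogonal to \<open>W\<close>, which contains it.\<close>

lemma symmetric_max_quadratic_form_eigenvector:
  fixes A :: "real^'k^'k"
  assumes sym: "transpose A = A" and W: "subspace W" "u \<in> W" "A *v u \<in> W" and uu: "u \<bullet> u = 1"
    and max: "\<And>x. x \<in> W \<Longrightarrow> x \<bullet> (A *v x) \<le> (u \<bullet> (A *v u)) * (x \<bullet> x)"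
  shows "A *v u = (u \<bullet> (A *v u)) *\<^sub>R u"
proof -
  define l where "l = u \<bullet> (A *v u)"
  have first_order: "w \<bullet> (A *v u) - l * (u \<bullet> w) = 0" if "w \<in> W" for w
  proof (rule linear_coeff_eq_0_if_quadratic_nonpos[where d = "w \<bullet> (A *v w) - l * (w \<bullet> w)"])
    fix t :: real
    have "u + t *\<^sub>R w \<in> W"
      using W that by (simp add: subspace_add subspace_scale)
    then have "(u + t *\<^sub>R w) \<bullet> (A *v (u + t *\<^sub>R w)) \<le> l * ((u + t *\<^sub>R w) \<bullet> (u + t *\<^sub>R w))"
      unfolding l_def by (rule max)
    moreover have "u \<bullet> (A *v w) = w \<bullet> (A *v u)"
      using symmetric_mulv_inner[OF sym, of w u] by (simp add: inner_commute)
    ultimately show "2 * t * (w \<bullet> (A *v u) - l * (u \<bullet> w)) + t\<^sup>2 * (w \<bullet> (A *v w) - l * (w \<bullet> w)) \<le> 0"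
      by (simp add: uu l_def[symmetric] power2_eq_square algebra_simps inner_commute)
  qed
  define r where "r = A *v u - l *\<^sub>R u"
  have "r \<in> W"
    using W by (simp add: r_def subspace_diff subspace_scale)
  then have "r \<bullet> r = 0"
    using first_order[of r] by (simp add: r_def inner_commute algebra_simps)
  then show ?thesis
    by (simp add: r_def l_def)
qed

lemma symmetric_eigenvector_in_invariant_subspace:
  fixes A :: "real^'k^'k"
  assumes sym: "transpose A = A" and W: "subspace W" "W \<noteq> {0}" and inv: "\<forall>x\<in>W. A *v x \<in> W"
  obtains u l where "u \<in> W" "norm u = 1" "A *v u = l *\<^sub>R u"
proof -
  let ?K = "W \<inter> sphere 0 1"
  have "compact ?K"
    by (simp add: closed_subspace W(1) closed_Int_compact)
  obtain w where "w \<in> W" "w \<noteq> 0"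
    using W subspace_0 by blast
  then have "w /\<^sub>R norm w \<in> ?K"
    using W(1) by (auto simp: subspace_scale)
  then have "?K \<noteq> {}"
    by blast
  have "continuous_on ?K (\<lambda>x. x \<bullet> (A *v x))"
    by (intro continuous_intros linear_continuous_on linear_linear[THEN iffD1] matrix_vector_mul_linear)
  then obtain u where u: "u \<in> ?K" and umax: "\<And>y. y \<in> ?K \<Longrightarrow> y \<bullet> (A *v y) \<le> u \<bullet> (A *v u)"
    using continuous_attains_sup[OF \<open>compact ?K\<close> \<open>?K \<noteq> {}\<close>] by blast
  have "x \<bullet> (A *v x) \<le> (u \<bullet> (A *v u)) * (x \<bullet> x)" if "x \<in> W" for x
  proof (cases "x = 0")
    case False
    have "x /\<^sub>R norm x \<in> ?K"
      using that False W(1) by (auto simp: subspace_scale)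
    then have "(x /\<^sub>R norm x) \<bullet> (A *v (x /\<^sub>R norm x)) \<le> u \<bullet> (A *v u)"
      by (rule umax)
    then show ?thesis
      using False by (simp add: matrix_vector_mult_scaleR dot_square_norm power2_eq_square field_simps)
  qed simp
  moreover have "u \<in> W" "u \<bullet> u = 1"
    using u by (auto simp: dot_square_norm)
  ultimately have "A *v u = (u \<bullet> (A *v u)) *\<^sub>R u"
    using inv by (intro symmetric_max_quadratic_form_eigenvector[OF sym W(1)]) auto
  then show ?thesis
    using that u by auto
qed

lemma span_insert_unit_orthogonal_complement:
  assumes "subspace W" "u \<in> W" "norm u = 1" "span B = {x \<in> W. u \<bullet> x = 0}"
  shows "span (insert u B) = W"
proof
  show "span (insert u B) \<subseteq> W"
    using assms span_superset[of B] by (intro span_minimal) auto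
  show "W \<subseteq> span (insert u B)"
  proof
    fix x
    assume "x \<in> W"
    then have "x - (u \<bullet> x) *\<^sub>R u \<in> span B"
      using assms by (simp add: subspace_diff subspace_scale inner_diff_right dot_square_norm)
    then show "x \<in> span (insert u B)"
      unfolding span_breakdown_eq by blast
  qed
qed

lemma symmetric_orthonormal_eigenbasis_subspace:
  fixes A :: "real^'k^'k"
  assumes sym: "transpose A = A"
  shows "subspace W \<Longrightarrow> \<forall>x\<in>W. A *v x \<in> W \<Longrightarrow>
    \<exists>B. finite B \<and> B \<subseteq> W \<and> span B = W \<and> pairwise orthogonal B \<and>
        (\<forall>b\<in>B. norm b = 1 \<and> (\<exists>l. A *v b = l *\<^sub>R b))"
proof (induction "dim W" arbitrary: W rule: less_induct)
  case less
  show ?case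
  proof (cases "W = {0}")
    case True
    then show ?thesis
      by (intro exI[of _ "{}"]) auto
  next
    case False
    obtain u l where u: "u \<in> W" "norm u = 1" "A *v u = l *\<^sub>R u"
      using symmetric_eigenvector_in_invariant_subspace[OF sym less.prems(1) False less.prems(2)] .
    define W' where "W' = {x \<in> W. u \<bullet> x = 0}"
    have "subspace W'"
      using less.prems(1) unfolding W'_def subspace_def by (auto simp: inner_add_right)
    have "u \<bullet> (A *v x) = l * (u \<bullet> x)" for x
      using symmetric_mulv_inner[OF sym, of u x] u(3) by simp
    then have "\<forall>x\<in>W'. A *v x \<in> W'"
      using less.prems(2) by (simp add: W'_def)
    have "u \<notin> W'"
      using u by (simp add: W'_def dot_square_norm)
    then have "W' \<subset> W"
      using u(1) unfolding W'_def by blast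
    then have "dim W' < dim W"
      using \<open>subspace W'\<close> less.prems(1) by (intro dim_psubset) (simp add: span_eq_iff[THEN iffD2])
    from less.hyps[OF this \<open>subspace W'\<close> \<open>\<forall>x\<in>W'. A *v x \<in> W'\<close>]
    obtain B' where B': "finite B'" "B' \<subseteq> W'" "span B' = W'" "pairwise orthogonal B'"
      "\<forall>b\<in>B'. norm b = 1 \<and> (\<exists>l. A *v b = l *\<^sub>R b)"
      by blast
    have "span (insert u B') = W"
      using span_insert_unit_orthogonal_complement less.prems(1) u(1,2) B'(3) by (simp add: W'_def)
    moreover have "pairwise orthogonal (insert u B')"
      using B'(2,4) unfolding pairwise_insert by (auto simp: W'_def orthogonal_def inner_commute)
    ultimately show ?thesis
      using B' u by (intro exI[of _ "insert u B'"]) (auto simp: W'_def)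
  qed
qed

lemma symmetric_orthonormal_eigenbasis:
  fixes A :: "real^'k^'k"
  assumes "transpose A = A"
  obtains B where "finite B" "span B = UNIV" "pairwise orthogonal B"
    "\<And>b. b \<in> B \<Longrightarrow> norm b = 1" "\<And>b. b \<in> B \<Longrightarrow> \<exists>l. A *v b = l *\<^sub>R b"
  using symmetric_orthonormal_eigenbasis_subspace[OF assms subspace_UNIV] that by auto

lemma orthonormal_sum_inner_scaleR:
  fixes f :: "'a::real_inner \<Rightarrow> 'b::real_vector"
  assumes "finite B" "pairwise orthogonal B" "\<And>b. b \<in> B \<Longrightarrow> norm b = 1" "c \<in> B"
  shows "(\<Sum>b\<in>B. (b \<bullet> c) *\<^sub>R f b) = f c"
proof -
  have "(\<Sum>b\<in>B. (b \<bullet> c) *\<^sub>R f b) = (c \<bullet> c) *\<^sub>R f c + (\<Sum>b\<in>B - {c}. (b \<bullet> c) *\<^sub>R f b)"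
    using assms(1,4) by (rule sum.remove)
  also have "(\<Sum>b\<in>B - {c}. (b \<bullet> c) *\<^sub>R f b) = 0"
  proof (rule sum.neutral, rule ballI)
    fix b
    assume "b \<in> B - {c}"
    then have "b \<bullet> c = 0"
      using assms(2,4) unfolding pairwise_def orthogonal_def by blast
    then show "(b \<bullet> c) *\<^sub>R f b = 0"
      by simp
  qed
  finally show ?thesis
    using assms(3)[OF assms(4)] by (simp add: dot_square_norm)
qed

lemma pos_def_eigenvalue_pos:
  assumes "pos_def A" "norm b = 1" "A *v b = l *\<^sub>R b"
  shows "l > 0"
proof -
  have "b \<bullet> (A *v b) = l"
    using assms(2,3) by (simp add: dot_square_norm)
  moreover have "b \<noteq> 0"
    using assms(2) by auto
  ultimately show ?thesis
    using assms(1) by (auto simp: pos_def_def)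
qed

lemma
  fixes B :: "(real^'k) set"
  assumes B: "finite B" "span B = UNIV" "pairwise orthogonal B" "\<And>b. b \<in> B \<Longrightarrow> norm b = 1"
    and s: "\<And>b. b \<in> B \<Longrightarrow> s b > 0"
  shows pos_def_orthonormal_sum_outer: "pos_def (\<Sum>b\<in>B. s b *\<^sub>R outer b b)"
    and orthonormal_sum_outer_mulv: "c \<in> B \<Longrightarrow> (\<Sum>b\<in>B. s b *\<^sub>R outer b b) *v c = s c *\<^sub>R c"
proof -
  let ?M = "\<Sum>b\<in>B. s b *\<^sub>R outer b b"
  have Mx: "?M *v x = (\<Sum>b\<in>B. (b \<bullet> x) *\<^sub>R (s b *\<^sub>R b))" for x
    by (simp add: sum_matrix_vector_mult scaleR_matrix_vector_assoc[symmetric] outer_mulv mult.commute)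
  show "?M *v c = s c *\<^sub>R c" if "c \<in> B"
    using orthonormal_sum_inner_scaleR[OF B(1,3,4) that, of "\<lambda>b. s b *\<^sub>R b"] by (simp add: Mx)
  have "transpose ?M = ?M"
    by (simp add: vec_eq_iff transpose_def outer_def mult.commute)
  moreover have "0 < x \<bullet> (?M *v x)" if x: "x \<noteq> 0" for x
  proof -
    have "\<exists>c\<in>B. c \<bullet> x \<noteq> 0"
    proof (rule ccontr)
      assume "\<not> (\<exists>c\<in>B. c \<bullet> x \<noteq> 0)"
      then have "orthogonal x x"
        using orthogonal_to_span[of x B x] B(2) by (auto simp: orthogonal_def inner_commute)
      then show False
        using x by (simp add: orthogonal_def)
    qed
    then obtain c where c: "c \<in> B" "c \<bullet> x \<noteq> 0"
      by blast
    have "x \<bullet> (?M *v x) = (\<Sum>b\<in>B. s b * (b \<bullet> x)\<^sup>2)"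
      by (simp add: Mx inner_sum_right power2_eq_square mult_ac inner_commute)
    also have "\<dots> > 0"
    proof (rule sum_pos2[OF B(1) c(1)])
      show "0 < s c * (c \<bullet> x)\<^sup>2"
        using s[OF c(1)] c(2) by simp
      show "\<And>b. b \<in> B \<Longrightarrow> 0 \<le> s b * (b \<bullet> x)\<^sup>2"
        using s by (simp add: less_imp_le)
    qed
    finally show ?thesis .
  qed
  ultimately show "pos_def ?M"
    by (simp add: pos_def_def)
qed

lemma pos_def_sqrt_exists:
  fixes P :: "real^'k^'k"
  assumes "pos_def P"
  shows "\<exists>M. pos_def M \<and> M ** M = P"
proof -
  obtain B where B: "finite B" "span B = UNIV" "pairwise orthogonal B"
    "\<And>b. b \<in> B \<Longrightarrow> norm b = 1" "\<And>b. b \<in> B \<Longrightarrow> \<exists>l. P *v b = l *\<^sub>R b"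
    using assms symmetric_orthonormal_eigenbasis by (metis pos_def_def)
  have "\<exists>s>0. P *v b = (s * s) *\<^sub>R b" if b: "b \<in> B" for b
  proof -
    obtain l where l: "P *v b = l *\<^sub>R b"
      using B(5)[OF b] by blast
    then have "l > 0"
      using pos_def_eigenvalue_pos[OF assms B(4)[OF b]] by blast
    then show ?thesis
      using l by (intro exI[of _ "sqrt l"]) simp
  qed
  then obtain s where s: "\<And>b. b \<in> B \<Longrightarrow> s b > 0" "\<And>b. b \<in> B \<Longrightarrow> P *v b = (s b * s b) *\<^sub>R b"
    by metis
  define M where "M = (\<Sum>b\<in>B. s b *\<^sub>R outer b b)"
  have "M ** M = P"
  proof (subst matrix_eq, intro allI)
    fix x :: "real^'k"
    have "(M ** M) *v b = P *v b" if "b \<in> B" for b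
      using that orthonormal_sum_outer_mulv[OF B(1-4), where s = s] s
      by (simp add: M_def matrix_vector_mul_assoc[symmetric] matrix_vector_mult_scaleR s(2))
    moreover have "x \<in> span B"
      using B(2) by simp
    ultimately show "(M ** M) *v x = P *v x"
      by (rule linear_eq_on_span[OF matrix_vector_mul_linear matrix_vector_mul_linear])
  qed
  moreover have "pos_def M"
    unfolding M_def using B(1-4) s(1) by (rule pos_def_orthonormal_sum_outer)
  ultimately show ?thesis
    by blast
qed

text \<open>On an eigenvector \<open>b\<close> of \<open>M\<close> with eigenvalue \<open>\<mu> > 0\<close>, the vector
  \<open>y = N b - \<mu> b\<close> satisfies \<open>N y + \<mu> y = N\<^sup>2 b - \<mu>\<^sup>2 b = 0\<close>, which forces \<open>y = 0\<close>.\<close>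

lemma pos_def_sqrt_unique:
  fixes M N :: "real^'k^'k"
  assumes M: "pos_def M" and N: "pos_def N" and MN: "M ** M = N ** N"
  shows "M = N"
proof -
  obtain B where B: "span B = UNIV" "\<And>b. b \<in> B \<Longrightarrow> norm b = 1"
    "\<And>b. b \<in> B \<Longrightarrow> \<exists>l. M *v b = l *\<^sub>R b"
    using M symmetric_orthonormal_eigenbasis by (metis pos_def_def)
  have "N *v b = M *v b" if b: "b \<in> B" for b
  proof -
    obtain \<mu> where \<mu>: "M *v b = \<mu> *\<^sub>R b"
      using B(3)[OF b] by blast
    then have "\<mu> > 0"
      using pos_def_eigenvalue_pos[OF M B(2)[OF b]] by blast
    define y where "y = N *v b - \<mu> *\<^sub>R b"
    have "N *v y + \<mu> *\<^sub>R y = (N ** N) *v b - (\<mu> * \<mu>) *\<^sub>R b"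
      by (simp add: y_def matrix_vector_mul_assoc[symmetric] matrix_vector_mult_diff_distrib
          matrix_vector_mult_scaleR algebra_simps)
    also have "\<dots> = 0"
      using \<mu> by (simp flip: MN add: matrix_vector_mul_assoc[symmetric] matrix_vector_mult_scaleR)
    finally have "y \<bullet> (N *v y) + \<mu> * (y \<bullet> y) = 0"
      by (metis inner_add_right inner_scaleR_right inner_zero_right)
    then have "y = 0"
      using N \<open>\<mu> > 0\<close> unfolding pos_def_def
      by (metis add_pos_nonneg inner_ge_zero less_numeral_extra(3) mult_nonneg_nonneg order_less_imp_le)
    then show ?thesis
      using \<mu> by (simp add: y_def)
  qed
  moreover have "x \<in> span B" for x
    using B(1) by simp
  ultimately have "N *v x = M *v x" for x
    by (rule linear_eq_on_span[OF matrix_vector_mul_linear matrix_vector_mul_linear])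
  then show ?thesis
    by (simp add: matrix_eq)
qed

lemma
  fixes A :: "'a::semiring_1^'n^'n"
  assumes "invertible A"
  shows matrix_inv_right: "A ** matrix_inv A = mat 1"
    and matrix_inv_left: "matrix_inv A ** A = mat 1"
proof -
  have "\<exists>A'. A ** A' = mat 1 \<and> A' ** A = mat 1"
    using assms by (simp add: invertible_def)
  then have "A ** matrix_inv A = mat 1 \<and> matrix_inv A ** A = mat 1"
    unfolding matrix_inv_def by (rule someI_ex)
  then show "A ** matrix_inv A = mat 1" "matrix_inv A ** A = mat 1"
    by auto
qed

lemma pos_def_invertible:
  fixes A :: "real^'k^'k"
  assumes "pos_def A"
  shows "invertible A"
proof -
  have "inj ((*v) A)"
  proof (rule injI)
    fix x y
    assume "A *v x = A *v y"
    then have "(x - y) \<bullet> (A *v (x - y)) = 0"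
      by (simp add: matrix_vector_mult_diff_distrib)
    then show "x = y"
      using assms unfolding pos_def_def by (metis less_irrefl right_minus_eq)
  qed
  then show ?thesis
    using matrix_left_invertible_injective invertible_left_inverse by blast
qed

lemma pos_def_matrix_inv:
  fixes A :: "real^'k^'k"
  assumes "pos_def A"
  shows "pos_def (matrix_inv A)"
proof -
  let ?I = "matrix_inv A"
  have inv: "A ** ?I = mat 1" "?I ** A = mat 1"
    using pos_def_invertible[OF assms] by (rule matrix_inv_right, rule matrix_inv_left)
  have sym: "transpose A = A"
    using assms by (simp add: pos_def_def)
  have "transpose ?I ** A = mat 1"
    using arg_cong[OF inv(1), of transpose] by (simp add: matrix_transpose_mul sym)
  then have "transpose ?I = transpose ?I ** (A ** ?I)"
    using inv(1) by simp
  also have "\<dots> = ?I"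
    using \<open>transpose ?I ** A = mat 1\<close> by (simp add: matrix_mul_assoc)
  finally have "transpose ?I = ?I" .
  moreover have "0 < x \<bullet> (?I *v x)" if "x \<noteq> 0" for x
  proof -
    define y where "y = ?I *v x"
    have x: "x = A *v y"
      by (simp add: y_def matrix_vector_mul_assoc inv(1))
    then have "y \<noteq> 0"
      using that by auto
    then have "0 < y \<bullet> (A *v y)"
      using assms by (simp add: pos_def_def)
    also have "y \<bullet> (A *v y) = x \<bullet> (?I *v x)"
      unfolding x[symmetric] y_def[symmetric] by (rule inner_commute)
    finally show ?thesis .
  qed
  ultimately show ?thesis
    by (simp add: pos_def_def)
qed

lemma
  fixes A :: "real^'k^'k"
  assumes "pos_def A"
  shows pos_def_inv_sqrt: "pos_def (inv_sqrt A)"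
    and inv_sqrt_mult_self: "inv_sqrt A ** inv_sqrt A = matrix_inv A"
proof -
  obtain M where M: "pos_def M" "M ** M = matrix_inv A"
    using pos_def_sqrt_exists[OF pos_def_matrix_inv[OF assms]] by blast
  have "\<exists>!M. pos_def M \<and> M ** M = matrix_inv A"
  proof (rule ex1I[of _ M])
    fix N
    assume "pos_def N \<and> N ** N = matrix_inv A"
    then show "N = M"
      using M pos_def_sqrt_unique[of N M] by simp
  qed (use M in simp)
  then have "pos_def (inv_sqrt A) \<and> inv_sqrt A ** inv_sqrt A = matrix_inv A"
    unfolding inv_sqrt_def by (rule theI')
  then show "pos_def (inv_sqrt A)" "inv_sqrt A ** inv_sqrt A = matrix_inv A"
    by auto
qed

lemma norm_inv_sqrt_mulv:
  fixes A :: "real^'k^'k"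
  assumes "pos_def A"
  shows "(norm (inv_sqrt A *v y))\<^sup>2 = y \<bullet> (matrix_inv A *v y)"
proof -
  have "transpose (inv_sqrt A) = inv_sqrt A"
    using pos_def_inv_sqrt[OF assms] by (simp add: pos_def_def)
  then have "(norm (inv_sqrt A *v y))\<^sup>2 = y \<bullet> (inv_sqrt A *v (inv_sqrt A *v y))"
    by (simp add: dot_square_norm[symmetric] symmetric_mulv_inner)
  also have "\<dots> = y \<bullet> (matrix_inv A *v y)"
    by (simp add: matrix_vector_mul_assoc inv_sqrt_mult_self[OF assms])
  finally show ?thesis .
qed

lemma pos_def_mat1_minus_outer:
  fixes s :: "real^'k"
  assumes "norm s < 1"
  shows "pos_def (mat 1 - outer s s)"
proof -
  have "transpose (mat 1 - outer s s) = mat 1 - outer s s"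
    by (simp add: vec_eq_iff transpose_def mat_def outer_def mult.commute)
  moreover have "0 < x \<bullet> ((mat 1 - outer s s) *v x)" if "x \<noteq> 0" for x
  proof -
    have "(s \<bullet> x)\<^sup>2 \<le> (norm s * norm x)\<^sup>2"
      using Cauchy_Schwarz_ineq2[of s x] by (metis abs_ge_zero power2_abs power_mono)
    also have "\<dots> < (norm x)\<^sup>2"
      using assms that by (intro power_strict_mono) auto
    also have "\<dots> = x \<bullet> x"
      by (simp add: power2_norm_eq_inner)
    finally show ?thesis
      by (simp add: matrix_vector_mult_diff_rdistrib outer_mulv inner_diff_right power2_eq_square
          inner_commute)
  qed
  ultimately show ?thesis
    by (simp add: pos_def_def)
qed

lemma pos_def_plus_outer:
  fixes C :: "real^'k^'k"
  assumes "pos_def C"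
  shows "pos_def (C + outer v v)"
proof -
  have "transpose (C + outer v v) = C + outer v v"
    using assms by (simp add: pos_def_def vec_eq_iff transpose_def outer_def mult.commute)
  moreover have "0 < x \<bullet> ((C + outer v v) *v x)" if "x \<noteq> 0" for x
  proof -
    have "x \<bullet> ((C + outer v v) *v x) = x \<bullet> (C *v x) + (v \<bullet> x)\<^sup>2"
      by (simp add: matrix_vector_mult_add_rdistrib outer_mulv inner_add_right power2_eq_square
          inner_commute)
    moreover have "0 < x \<bullet> (C *v x)"
      using assms that by (simp add: pos_def_def)
    ultimately show ?thesis
      by (simp add: add_pos_nonneg)
  qed
  ultimately show ?thesis
    by (simp add: pos_def_def)
qed

section \<open>Determinant of a rank-one update\<close>

text \<open>Only row \<open>k\<close> differs from the identity; removing from it the multiples of the other rows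
  leaves a diagonal matrix.\<close>

lemma det_mat1_plus_outer_axis:
  fixes z :: "real^'k"
  shows "det (mat 1 + outer (c *\<^sub>R axis k 1) z) = 1 + c * z$k"
proof -
  define D :: "real^'k^'k"
    where "D = (\<chi> i j. if i = j then (if i = k then 1 + c * z$k else 1) else 0)"
  have "det D = 1 + c * z$k"
    by (simp add: det_diagonal D_def)
  define x where "x = (\<Sum>j\<in>UNIV - {k}. (c * z$j) *s row j D)"
  have span: "x \<in> vec.span {row j D | j. j \<noteq> k}"
    unfolding x_def by (intro vec.span_sum vec.span_scale vec.span_base) auto
  have "x $ l = (if l = k then 0 else c * z$l)" for l
  proof -
    have "x $ l = (\<Sum>j\<in>UNIV - {k}. c * z$j * D$j$l)"
      by (simp add: x_def row_def)
    also have "\<dots> = (\<Sum>j\<in>UNIV - {k}. if j = l then c * z$j else 0)"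
      by (rule sum.cong) (simp_all add: D_def)
    also have "\<dots> = (if l = k then 0 else c * z$l)"
      by (simp add: sum.delta')
    finally show ?thesis .
  qed
  then have "(\<chi> m. if m = k then row k D + x else row m D) = mat 1 + outer (c *\<^sub>R axis k 1) z"
    by (simp add: vec_eq_iff row_def D_def mat_def outer_def axis_def)
  then have "det (mat 1 + outer (c *\<^sub>R axis k 1) z) = det D"
    using det_row_span[OF span] by simp
  then show ?thesis
    using \<open>det D = 1 + c * z$k\<close> by simp
qed

lemma orthogonal_conj_mat1_plus_outer:
  fixes Q :: "real^'k^'k"
  assumes "transpose Q ** Q = mat 1"
  shows "transpose Q ** (mat 1 + outer u w) ** Q = mat 1 + outer (transpose Q *v u) (transpose Q *v w)"
proof (subst matrix_eq, intro allI)
  fix x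
  have QtQx: "transpose Q *v (Q *v x) = x"
    using assms by (simp add: matrix_vector_mul_assoc)
  have "(transpose Q ** (mat 1 + outer u w) ** Q) *v x = x + (w \<bullet> (Q *v x)) *\<^sub>R (transpose Q *v u)"
    by (simp only: matrix_vector_mul_assoc[symmetric] matrix_mul_assoc matrix_vector_mult_add_rdistrib
        outer_mulv matrix_vector_right_distrib matrix_vector_mult_scaleR QtQx matrix_vector_mul_lid)
  also have "\<dots> = (mat 1 + outer (transpose Q *v u) (transpose Q *v w)) *v x"
    by (simp only: matrix_vector_mult_add_rdistrib outer_mulv matrix_vector_mul_lid
        transpose_mulv_inner)
  finally show "(transpose Q ** (mat 1 + outer u w) ** Q) *v x
      = (mat 1 + outer (transpose Q *v u) (transpose Q *v w)) *v x" .
qed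

text \<open>Conjugating by an orthogonal matrix that maps \<open>axis k 1\<close> to \<open>u / |u|\<close> reduces
  the general case to the previous lemma.\<close>

lemma det_mat1_plus_outer:
  fixes u w :: "real^'k"
  shows "det (mat 1 + outer u w) = 1 + u \<bullet> w"
proof (cases "u = 0")
  case True
  then have "outer u w = 0"
    by (simp add: vec_eq_iff outer_def)
  then show ?thesis
    using True by simp
next
  case False
  let ?k = "undefined :: 'k"
  have "norm (u /\<^sub>R norm u) = 1"
    using False by simp
  then obtain Q where Q: "orthogonal_matrix Q" "Q *v axis ?k 1 = u /\<^sub>R norm u"
    by (rule orthogonal_matrix_exists_basis)
  have QtQ: "transpose Q ** Q = mat 1"
    using Q(1) by (simp add: orthogonal_matrix_def)
  have "det (mat 1 + outer u w) = det (transpose Q ** (mat 1 + outer u w) ** Q)"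
    using QtQ det_mul[of "transpose Q" Q] by (simp add: det_mul det_transpose algebra_simps)
  also have "\<dots> = det (mat 1 + outer (norm u *\<^sub>R axis ?k 1) (transpose Q *v w))"
  proof -
    have "transpose Q *v u = norm u *\<^sub>R axis ?k 1"
      using Q(2) QtQ False
      by (metis matrix_vector_mul_assoc matrix_vector_mul_lid matrix_vector_mult_scaleR
          divideR_right norm_eq_zero)
    then show ?thesis
      by (simp add: orthogonal_conj_mat1_plus_outer[OF QtQ])
  qed
  also have "\<dots> = 1 + norm u * (w \<bullet> (Q *v axis ?k 1))"
    by (simp add: det_mat1_plus_outer_axis inner_axis flip: transpose_mulv_inner)
  also have "\<dots> = 1 + u \<bullet> w"
    using Q(2) False by (simp add: inner_commute)
  finally show ?thesis .
qed

lemma det_plus_outer: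
  fixes C :: "real^'k^'k"
  assumes "invertible C"
  shows "det (C + outer w w) = det C * (1 + w \<bullet> (matrix_inv C *v w))"
proof -
  have Cw: "C *v (matrix_inv C *v w) = w"
    by (simp add: matrix_vector_mul_assoc matrix_inv_right[OF assms])
  have "C + outer w w = C ** (mat 1 + outer (matrix_inv C *v w) w)"
    by (simp add: matrix_eq matrix_vector_mul_assoc[symmetric] matrix_vector_mult_add_rdistrib
        outer_mulv matrix_vector_right_distrib matrix_vector_mult_scaleR Cw)
  then show ?thesis
    by (simp add: det_mul det_mat1_plus_outer inner_commute)
qed

section \<open>Volumes of linear images\<close>

lemma measure_shear_cart:
  fixes a b :: "real^'n"
  assumes "m \<noteq> n"
  shows "measure lebesgue ((\<lambda>x. \<chi> i. if i = m then x$m + x$n else x$i) ` cbox a b)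
           = measure lebesgue (cbox a b)"
proof (cases "cbox a b = {}")
  case False
  let ?h = "\<lambda>x::real^'n. \<chi> i. if i = m then x$m + x$n else x$i"
  \<comment> \<open>\<open>measure_shear_interval\<close> needs \<open>0 \<le> a$n\<close>, so first translate the box along axis \<open>n\<close>\<close>
  define t :: "real^'n" where "t = (- a$n) *\<^sub>R axis n 1"
  have "?h ` cbox a b = (\<lambda>x. - ?h t + ?h (t + x)) ` cbox a b"
    by (rule image_cong) (auto simp: vec_eq_iff)
  also have "\<dots> = (+) (- ?h t) ` ?h ` cbox (t + a) (t + b)"
    by (simp add: cbox_translation image_comp o_def)
  finally have "?h ` cbox a b = (+) (- ?h t) ` ?h ` cbox (t + a) (t + b)" .
  then have "measure lebesgue (?h ` cbox a b) = measure lebesgue (?h ` cbox (t + a) (t + b))"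
    by (simp only: measure_translation)
  also have "\<dots> = measure lebesgue (cbox (t + a) (t + b))"
  proof (rule measure_shear_interval[OF assms])
    show "cbox (t + a) (t + b) \<noteq> {}"
      using False unfolding cbox_translation by simp
  qed (simp add: t_def)
  also have "\<dots> = measure lebesgue (cbox a b)"
    unfolding cbox_translation by (rule measure_translation)
  finally show ?thesis .
qed simp

text \<open>The library's \<open>measure_linear_image\<close> requires a well-ordered index type, which it uses
  only to compute the determinant of a shear.\<close>

definition det_scales_measure :: "(real^'n \<Rightarrow> real^'n) \<Rightarrow> bool" where
  "det_scales_measure f \<longleftrightarrow> (\<forall>S \<in> lmeasurable. f ` S \<in> lmeasurable \<and>
      measure lebesgue (f ` S) = \<bar>det (matrix f)\<bar> * measure lebesgue S)"

lemma det_scales_measure_comp: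
  fixes f g :: "real^'n \<Rightarrow> real^'n"
  assumes "linear f" "linear g" "det_scales_measure f" "det_scales_measure g"
  shows "det_scales_measure (f \<circ> g)"
  unfolding det_scales_measure_def
proof
  fix S :: "(real^'n) set"
  assume "S \<in> lmeasurable"
  moreover have "(f \<circ> g) ` S = f ` g ` S"
    by (simp add: image_comp)
  ultimately show "(f \<circ> g) ` S \<in> lmeasurable \<and>
      measure lebesgue ((f \<circ> g) ` S) = \<bar>det (matrix (f \<circ> g))\<bar> * measure lebesgue S"
    using assms matrix_compose[OF \<open>linear g\<close> \<open>linear f\<close>]
    by (simp add: det_scales_measure_def abs_mult det_mul)
qed

lemma det_scales_measure_singular:
  assumes "linear f" "\<And>x. f x $ i = 0"
  shows "det_scales_measure f"
proof -
  have "axis i 1 \<notin> range f"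
    using assms(2) by (metis axis_nth rangeE zero_neq_one)
  then have "\<not> inj f"
    using linear_injective_imp_surjective[OF \<open>linear f\<close>] by auto
  then show ?thesis
    using assms(1) det_nz_iff_inj[OF assms(1)]
    by (auto simp: det_scales_measure_def negligible_linear_singular_image negligible_imp_measure0
        negligible_imp_measurable)
qed

lemma det_scales_measure_stretch: "det_scales_measure (\<lambda>x. \<chi> i. c i * x$i)"
  by (simp add: det_scales_measure_def measurable_stretch measure_stretch matrix_def axis_def
      det_diagonal)

lemma det_scales_measure_shear:
  fixes m n :: "'n::finite"
  assumes "m \<noteq> n"
  shows "det_scales_measure (\<lambda>x. \<chi> i. if i = m then x$m + x$n else x$i)"
  unfolding det_scales_measure_def
proof
  fix S :: "(real^'n) set"
  assume "S \<in> lmeasurable"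
  let ?h = "\<lambda>x::real^'n. \<chi> i. if i = m then x$m + x$n else x$i"
  have lin: "linear ?h"
    by (rule linearI) (auto simp: vec_eq_iff algebra_simps)
  have "measure lebesgue (?h ` cbox a b) = 1 * measure lebesgue (cbox a b)" for a b
    using measure_shear_cart[OF assms] by simp
  then have "?h ` S \<in> lmeasurable \<and> 1 * measure lebesgue S = measure lebesgue (?h ` S)"
    by (rule measure_linear_sufficient[OF lin \<open>S \<in> lmeasurable\<close>])
  moreover have "matrix ?h = (\<chi> k. if k = m then row m (mat 1) + 1 *s row n (mat 1) else row k (mat 1))"
    by (simp add: vec_eq_iff matrix_def row_def mat_def axis_def)
  then have "det (matrix ?h) = 1"
    using det_row_operation[OF assms, where c=1 and A="mat 1 :: real^'n^'n"] by simp
  ultimately show "?h ` S \<in> lmeasurable \<and> measure lebesgue (?h ` S) = \<bar>det (matrix ?h)\<bar> * measure lebesgue S"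
    by simp
qed

lemma det_scales_measure_swap:
  fixes m n :: "'n::finite"
  assumes "m \<noteq> n"
  shows "det_scales_measure (\<lambda>x. \<chi> i. x $ Transposition.transpose m n i)"
proof -
  let ?add = "\<lambda>m n (x::real^'n). \<chi> i. if i = m then x$m + x$n else x$i"
  let ?neg = "\<lambda>x::real^'n. \<chi> i. (if i = n then -1 else 1) * x$i"
  have lin: "linear (?add m n)" "linear (?add n m)" "linear ?neg"
    by (auto intro!: linearI simp: vec_eq_iff algebra_simps)
  \<comment> \<open>\<open>(a, b) \<mapsto> (a + b, b) \<mapsto> (a + b, - a) \<mapsto> (b, - a) \<mapsto> (b, a)\<close> in coordinates \<open>m, n\<close>\<close>
  have "(\<lambda>x. \<chi> i. x $ Transposition.transpose m n i)
      = ?neg \<circ> ?add m n \<circ> (?neg \<circ> ?add n m \<circ> ?neg) \<circ> ?add m n"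
    using assms by (auto simp: fun_eq_iff vec_eq_iff Transposition.transpose_def)
  moreover have "det_scales_measure (?neg \<circ> ?add m n \<circ> (?neg \<circ> ?add n m \<circ> ?neg) \<circ> ?add m n)"
    using lin assms
    by (intro det_scales_measure_comp det_scales_measure_shear det_scales_measure_stretch
        linear_compose) auto
  ultimately show ?thesis
    by simp
qed

lemma measure_linear_image_cart:
  fixes f :: "real^'n \<Rightarrow> real^'n"
  assumes "linear f" and "S \<in> lmeasurable"
  shows "f ` S \<in> lmeasurable \<and> measure lebesgue (f ` S) = \<bar>det (matrix f)\<bar> * measure lebesgue S"
proof -
  have "det_scales_measure f"
    using assms(1)
    by (rule induct_linear_elementary)
      (blast intro: det_scales_measure_comp det_scales_measure_singular det_scales_measure_stretch
        det_scales_measure_shear det_scales_measure_swap)+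
  then show ?thesis
    using assms(2) by (simp add: det_scales_measure_def)
qed

lemma interior_cosym_nonempty:
  fixes T :: "'n \<Rightarrow> real^'k"
  assumes "span (T ` J) = UNIV"
  shows "interior (cosym T J) \<noteq> {}"
proof -
  let ?Y = "T ` J \<union> uminus ` T ` J"
  obtain j where "j \<in> J"
  proof (cases "J = {}")
    case True
    then have "axis (undefined :: 'k) (1 :: real) \<in> span {}"
      using assms by simp
    then show ?thesis
      by (simp add: axis_eq_0_iff)
  qed auto
  then have "T j \<in> convex hull ?Y" "- T j \<in> convex hull ?Y"
    by (auto intro: hull_inc)
  then have "(1/2) *\<^sub>R T j + (1/2) *\<^sub>R (- T j) \<in> convex hull ?Y"
    by (intro convexD[OF convex_convex_hull]) auto
  then have "0 \<in> convex hull ?Y"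
    by simp
  then have "affine hull ?Y = span ?Y"
    by (meson affine_hull_span_0 convex_hull_subset_affine_hull subsetD)
  also have "\<dots> = UNIV"
    using span_mono[of "T ` J" ?Y] assms by auto
  finally have "rel_interior (convex hull ?Y) = interior (convex hull ?Y)"
    by (simp add: rel_interior_interior)
  moreover have "rel_interior (convex hull ?Y) \<noteq> {}"
    using \<open>0 \<in> convex hull ?Y\<close> rel_interior_eq_empty[OF convex_convex_hull] by blast
  ultimately show ?thesis
    by (simp add: cosym_def)
qed

lemma measure_less_if_psubset:
  fixes K L :: "'a::euclidean_space set"
  assumes K: "compact K" "convex K" "interior K \<noteq> {}" and L: "compact L" "L \<subset> K"
  shows "measure lebesgue L < measure lebesgue K"
proof -
  have "\<not> interior K \<subseteq> L"
  proof
    assume "interior K \<subseteq> L"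
    then have "closure (interior K) \<subseteq> L"
      using L(1) by (simp add: closure_minimal compact_imp_closed)
    moreover have "closure (interior K) = K"
      using convex_closure_interior[OF K(2,3)] K(1) by (simp add: compact_imp_closed)
    ultimately show False
      using L(2) by blast
  qed
  moreover have "open (interior K - L)"
    using L(1) by (simp add: open_Diff compact_imp_closed)
  ultimately have "\<not> negligible (interior K - L)"
    using open_not_negligible by blast
  moreover have "interior K - L \<subseteq> K - L"
    using interior_subset by blast
  ultimately have "\<not> negligible (K - L)"
    using negligible_subset by blast
  moreover have KL: "K \<in> lmeasurable" "L \<in> lmeasurable"
    using K(1) L(1) by (simp_all add: lmeasurable_compact)
  ultimately have "measure lebesgue (K - L) \<noteq> 0"
    using negligible_iff_measure0[OF fmeasurable_Diff[OF KL(1) fmeasurableD[OF KL(2)]]] by simp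
  moreover have "measure lebesgue (K - L) = measure lebesgue K - measure lebesgue L"
    using KL L(2) by (intro measure_Diff) (auto simp: fmeasurable_def)
  ultimately show ?thesis
    using measure_nonneg[of lebesgue "K - L"] by linarith
qed

lemma scaled_measure_subset_le:
  fixes K L :: "'a::euclidean_space set"
  assumes K: "compact K" "convex K" "interior K \<noteq> {}" and L: "compact L" "L \<subseteq> K"
    and c: "0 \<le> c" "c \<le> 1"
  shows "c * measure lebesgue L \<le> measure lebesgue K"
    and "c * measure lebesgue L = measure lebesgue K \<longleftrightarrow> c = 1 \<and> L = K"
proof -
  have LK: "measure lebesgue L \<le> measure lebesgue K"
    using measure_mono_fmeasurable[OF L(2)] K(1) L(1) by (simp add: lmeasurable_compact fmeasurableD)
  have cL: "c * measure lebesgue L \<le> measure lebesgue L"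
    using mult_left_le_one_le[OF measure_nonneg c] .
  then show "c * measure lebesgue L \<le> measure lebesgue K"
    using LK by linarith
  have "K \<noteq> {}"
    using K(3) interior_subset by blast
  then have "measure lebesgue K > 0"
    using measure_less_if_psubset[OF K compact_empty] by auto
  show "c * measure lebesgue L = measure lebesgue K \<longleftrightarrow> c = 1 \<and> L = K"
  proof
    assume eq: "c * measure lebesgue L = measure lebesgue K"
    have "c = 1"
    proof (rule ccontr)
      assume "c \<noteq> 1"
      then have "c * measure lebesgue K < 1 * measure lebesgue K"
        using c \<open>measure lebesgue K > 0\<close> by (intro mult_strict_right_mono) auto
      moreover have "c * measure lebesgue L \<le> c * measure lebesgue K"
        using LK c(1) by (rule mult_left_mono)
      ultimately show False
        using eq by simp
    qed
    moreover have "L = K"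
      using measure_less_if_psubset[OF K L(1)] L(2) eq \<open>c = 1\<close> by auto
    ultimately show "c = 1 \<and> L = K" ..
  qed simp
qed

section \<open>Normalising and modifying a uframe\<close>

lemma det_gram_split:
  fixes T :: "'n::finite \<Rightarrow> real^'k"
  assumes "pos_def (gram T (UNIV - {i}))"
  shows "det (gram T UNIV) = det (gram T (UNIV - {i})) * (1 + (norm (Bmat T (UNIV - {i}) *v T i))\<^sup>2)"
  using gram_split[of T i] det_plus_outer[OF pos_def_invertible[OF assms]] norm_inv_sqrt_mulv[OF assms]
  by (simp add: Bmat_def)

lemma is_uframe_normalize:
  fixes T :: "'n::finite \<Rightarrow> real^'k"
  assumes "pos_def (gram T UNIV)"
  shows "is_uframe (\<lambda>j. Bmat T UNIV *v T j)"
proof -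
  let ?A = "gram T UNIV" and ?B = "Bmat T UNIV"
  have B: "transpose ?B = ?B" "?B ** ?B = matrix_inv ?A"
    using pos_def_inv_sqrt[OF assms] inv_sqrt_mult_self[OF assms] by (simp_all add: Bmat_def pos_def_def)
  have "?B ** (?B ** ?A) = mat 1"
    using matrix_inv_left[OF pos_def_invertible[OF assms]] B(2) by (simp add: matrix_mul_assoc)
  then have "?B ** ?A ** ?B = mat 1"
    using matrix_left_right_inverse by blast
  then have "gram (\<lambda>j. ?B *v T j) UNIV = mat 1"
    using gram_image[of ?B T UNIV] B(1) by simp
  then show ?thesis
    using is_frame_if_gram_eq_mat1 by (simp add: is_uframe_def)
qed

lemma measure_cosym_normalize:
  fixes T :: "'n::finite \<Rightarrow> real^'k"
  assumes "pos_def (gram T UNIV)"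
  shows "measure lebesgue (cosym (\<lambda>j. Bmat T UNIV *v T j) J)
    = measure lebesgue (cosym T J) / sqrt (det (gram T UNIV))"
proof -
  let ?A = "gram T UNIV" and ?B = "Bmat T UNIV"
  have "det ?B * det ?B * det ?A = det (mat 1 :: real^'k^'k)"
    using inv_sqrt_mult_self[OF assms] matrix_inv_left[OF pos_def_invertible[OF assms]]
    by (metis Bmat_def det_mul)
  then have eq: "det ?B * det ?B * det ?A = 1"
    by simp
  have "det ?A > 0"
  proof (rule ccontr)
    assume "\<not> det ?A > 0"
    then have "det ?B * det ?B * det ?A \<le> 0"
      by (simp add: mult_nonneg_nonpos)
    then show False
      using eq by simp
  qed
  then have "(det ?B)\<^sup>2 = 1 / det ?A"
    using eq by (simp add: field_simps power2_eq_square)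
  then have detB: "\<bar>det ?B\<bar> = 1 / sqrt (det ?A)"
    by (metis real_sqrt_abs real_sqrt_divide real_sqrt_one)
  have "compact (cosym T J)"
    unfolding cosym_def by (intro finite_imp_compact_convex_hull) auto
  then have "measure lebesgue ((\<lambda>x. ?B *v x) ` cosym T J) = \<bar>det ?B\<bar> * measure lebesgue (cosym T J)"
    using measure_linear_image_cart[OF matrix_vector_mul_linear[of ?B] lmeasurable_compact] by simp
  then show ?thesis
    by (simp add: cosym_image detB)
qed

lemma
  fixes S :: "'n::finite \<Rightarrow> real^'k"
  assumes "gram S UNIV = mat 1" and "norm (S i) < 1"
  shows pos_def_gram_fun_upd: "pos_def (gram (S(i := v)) UNIV)"
    and det_gram_fun_upd: "det (gram (S(i := v)) UNIV)
      = (1 + (norm (Bmat S (UNIV - {i}) *v v))\<^sup>2) / (1 + (norm (Bmat S (UNIV - {i}) *v S i))\<^sup>2)"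
proof -
  have C: "pos_def (gram S (UNIV - {i}))"
    using gram_split[of S i] assms(1) pos_def_mat1_minus_outer[OF assms(2)] by (simp add: eq_diff_eq)
  then show "pos_def (gram (S(i := v)) UNIV)"
    using gram_split[of "S(i := v)" i] pos_def_plus_outer by (simp add: gram_fun_upd_remove)
  have "det (gram (S(i := v)) UNIV) * (1 + (norm (Bmat S (UNIV - {i}) *v S i))\<^sup>2)
      = 1 + (norm (Bmat S (UNIV - {i}) *v v))\<^sup>2"
    using det_gram_split[OF C] det_gram_split[of "S(i := v)" i] C assms(1)
    by (simp add: gram_fun_upd_remove Bmat_def)
  moreover have "1 + (norm (Bmat S (UNIV - {i}) *v S i))\<^sup>2 \<noteq> 0"
    by (smt (verit) zero_le_power2)
  ultimately show "det (gram (S(i := v)) UNIV)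
      = (1 + (norm (Bmat S (UNIV - {i}) *v v))\<^sup>2) / (1 + (norm (Bmat S (UNIV - {i}) *v S i))\<^sup>2)"
    by (simp add: eq_divide_eq)
qed

lemma det_gram_fun_upd_ge_1:
  fixes S :: "'n::finite \<Rightarrow> real^'k"
  assumes "gram S UNIV = mat 1" and "norm (S i) < 1"
    and "norm (Bmat S (UNIV - {i}) *v S i) \<le> norm (Bmat S (UNIV - {i}) *v v)"
  shows "1 \<le> det (gram (S(i := v)) UNIV)"
    and "det (gram (S(i := v)) UNIV) = 1
      \<longleftrightarrow> norm (Bmat S (UNIV - {i}) *v S i) = norm (Bmat S (UNIV - {i}) *v v)"
proof -
  define a b where "a = (norm (Bmat S (UNIV - {i}) *v S i))\<^sup>2" and "b = (norm (Bmat S (UNIV - {i}) *v v))\<^sup>2"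
  have "0 \<le> a" "a \<le> b"
    using assms(3) by (simp_all add: a_def b_def power_mono)
  moreover have "det (gram (S(i := v)) UNIV) = (1 + b) / (1 + a)"
    using det_gram_fun_upd[OF assms(1,2)] by (simp add: a_def b_def)
  ultimately show "1 \<le> det (gram (S(i := v)) UNIV)"
    by simp
  have "a = b \<longleftrightarrow> norm (Bmat S (UNIV - {i}) *v S i) = norm (Bmat S (UNIV - {i}) *v v)"
    by (simp add: a_def b_def power2_eq_iff_nonneg)
  then show "det (gram (S(i := v)) UNIV) = 1
      \<longleftrightarrow> norm (Bmat S (UNIV - {i}) *v S i) = norm (Bmat S (UNIV - {i}) *v v)"
    using \<open>det (gram (S(i := v)) UNIV) = (1 + b) / (1 + a)\<close> \<open>0 \<le> a\<close> by auto
qed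

theorem corollary1:
  fixes S :: "'n::finite \<Rightarrow> real^'k" and i :: 'n and v :: "real^'k"
  assumes "is_uframe S"
    and "norm (S i) < 1"
    and "norm (Bmat S (UNIV - {i}) *v S i) \<le> norm (Bmat S (UNIV - {i}) *v v)"
    and "cosym (S(i := v)) UNIV \<subseteq> cosym S UNIV"
  shows "is_uframe (\<lambda>j. Bmat (S(i := v)) UNIV *v (S(i := v)) j)
    \<and> measure lebesgue (cosym (\<lambda>j. Bmat (S(i := v)) UNIV *v (S(i := v)) j) UNIV)
        \<le> measure lebesgue (cosym S UNIV)
    \<and> (measure lebesgue (cosym (\<lambda>j. Bmat (S(i := v)) UNIV *v (S(i := v)) j) UNIV)
          = measure lebesgue (cosym S UNIV)
       \<longleftrightarrow> norm (Bmat S (UNIV - {i}) *v S i) = norm (Bmat S (UNIV - {i}) *v v)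
           \<and> cosym (S(i := v)) UNIV = cosym S UNIV)"
proof -
  let ?T = "S(i := v)"
  have S: "gram S UNIV = mat 1" "span (range S) = UNIV"
    using assms(1) by (auto simp: is_uframe_def is_frame_def)
  note A = pos_def_gram_fun_upd[OF S(1) assms(2)]
  define d where "d = det (gram ?T UNIV)"
  note d = det_gram_fun_upd_ge_1[OF S(1) assms(2,3), folded d_def]
  have "compact (cosym S UNIV)" "convex (cosym S UNIV)" "compact (cosym ?T UNIV)"
    unfolding cosym_def by (auto intro: finite_imp_compact_convex_hull)
  note scaled = scaled_measure_subset_le[OF this(1,2) interior_cosym_nonempty[OF S(2)] this(3) assms(4),
      of "1 / sqrt d"]
  show ?thesis
    using is_uframe_normalize[OF A] measure_cosym_normalize[OF A] scaled d by (auto simp: d_def)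
qed

end
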